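(* Let $\Omega=(\omega_1,\dots,\omega_N)\in\mathbb{R}^N\setminus\{0\}$ and $\|\Omega\|_\infty=\max_i|\omega_i|$. Let $u_*\in[\|\Omega\|_\infty,\frac2{\sqrt3}\|\Omega\|_\infty]$ be the solution of \[ N+2\sum_{j=1}^N\sqrt{1-\frac{\omega_j^2}{u_*^2}}=\sum_{j=1}^N\frac{1}{\sqrt{1-\frac{\omega_j^2}{u_*^2}}}, \] and set $\kappa_c(\Omega)=\dfrac{Nu_*}{N+\sum_{j=1}^N\sqrt{1-\omega_j^2/u_*^2}}$. Then for $\kappa>0$, the system $\dot\theta_i=\omega_i-\frac{\kappa}{N}\sum_{j=1}^N(1+\cos\theta_j)\sin\theta_i$ admits an equilibrium if and only if $\kappa\ge\kappa_c(\Omega)$; in particular $\kappa_c(\Omega)=\inf\{\kappa_*>0:\text{for all }\kappa>\kappa_*\text{ the system admits an equilibrium}\}$. Moreover \[ \frac{2N\|\Omega\|_\infty}{4N-1}\le\frac{16N\|\Omega\|_\infty}{(6N-3+\sqrt{4N^2-4N+9})\sqrt{5-2N+\sqrt{4N^2-4N+9}}\sqrt{3+2N-\sqrt{4N^2-4N+9}}}\le\kappa_c(\Omega)\le\frac{4}{3\sqrt3}\|\Omega\|_\infty, \] with equality in the second inequality when $\omega_i=0$ for all but at most one $i$, and equality in the third when $|\omega_i|=\|\Omega\|_\infty$ for all $i$.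
   Context: An equilibrium is $\Theta\in\mathbb{R}^N$ at which all right-hand sides vanish. *)

theory Defs
  imports "HOL-Analysis.Analysis"
begin

text \<open>Natural frequencies \<Omega> = (\<omega>_1,...,\<omega>_N) are vectors in real^'n, N = CARD('n).
  The sup-norm is the library's infnorm.\<close>

definition ustar_eq :: "real^'n \<Rightarrow> real \<Rightarrow> bool" where
  "ustar_eq \<Omega> u \<longleftrightarrow>
     real CARD('n) + 2 * (\<Sum>j\<in>UNIV. sqrt (1 - (\<Omega>$j)^2 / u^2))
       = (\<Sum>j\<in>UNIV. 1 / sqrt (1 - (\<Omega>$j)^2 / u^2))"

definition kappa_c :: "real^'n \<Rightarrow> real \<Rightarrow> real" where
  "kappa_c \<Omega> u =
     real CARD('n) * u / (real CARD('n) + (\<Sum>j\<in>UNIV. sqrt (1 - (\<Omega>$j)^2 / u^2)))"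

definition is_equilibrium :: "real^'n \<Rightarrow> real \<Rightarrow> real^'n \<Rightarrow> bool" where
  "is_equilibrium \<Omega> \<kappa> \<Theta> \<longleftrightarrow>
     (\<forall>i. \<Omega>$i - \<kappa> / real CARD('n) * (\<Sum>j\<in>UNIV. (1 + cos (\<Theta>$j)) * sin (\<Theta>$i)) = 0)"

definition has_equilibrium :: "real^'n \<Rightarrow> real \<Rightarrow> bool" where
  "has_equilibrium \<Omega> \<kappa> \<longleftrightarrow> (\<exists>\<Theta>. is_equilibrium \<Omega> \<kappa> \<Theta>)"

end

theory Submission
  imports Defs
begin

(* At an equilibrium sin \<theta>\<^sub>i = \<omega>\<^sub>i / R, where R = \<kappa>/N \<Sum>\<^sub>j (1 + cos \<theta>\<^sub>j) is
   determined self-consistently. Choosing every cos \<theta>\<^sub>j \<ge> 0 maximises that sum, so an equilibrium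
   exists iff \<kappa> \<ge> N R / (N + \<Sum>\<^sub>j sqrt (1 - \<omega>\<^sub>j\<^sup>2 / R\<^sup>2)) for some R \<ge> \<parallel>\<Omega>\<parallel>\<^sub>\<infinity>
   (conversely, the intermediate value theorem in R turns such an R into an equilibrium).
   The equation defining u\<^sub>\<star> makes u\<^sub>\<star> the strict global minimiser of this function of R:
   bounding each sqrt (1 - \<omega>\<^sub>j\<^sup>2 / R\<^sup>2) by its tangent at R = u\<^sub>\<star> and summing with the
   equation for u\<^sub>\<star> leaves 2 R\<^sup>3 - 3 u\<^sub>\<star> R\<^sup>2 + u\<^sub>\<star>\<^sup>3 = (R - u\<^sub>\<star>)\<^sup>2 (2 R + u\<^sub>\<star>) \<ge> 0.
   The upper bound evaluates this function at R = 2 \<parallel>\<Omega>\<parallel>\<^sub>\<infinity> / \<surd>3, where every cosine is at least 1/2; the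
   lower bound keeps only the largest frequency and maximises (2 N - 1 + s) sqrt (1 - s\<^sup>2) over s. *)

lemma infnorm_attained_cart:
  fixes x :: "real^'n"
  obtains i where "\<bar>x$i\<bar> = infnorm x"
proof -
  have "{\<bar>x$i\<bar> |i. i \<in> UNIV} = range (\<lambda>i. \<bar>x$i\<bar>)" by auto
  moreover have "Sup (range (\<lambda>i. \<bar>x$i\<bar>)) \<in> range (\<lambda>i. \<bar>x$i\<bar>)"
    by (simp add: cSup_eq_Max)
  ultimately show ?thesis using that unfolding infnorm_cart by auto
qed

lemma infnorm_le_iff_cart:
  fixes x :: "real^'n"
  shows "infnorm x \<le> r \<longleftrightarrow> (\<forall>i. \<bar>x$i\<bar> \<le> r)"
  by (metis component_le_infnorm_cart infnorm_attained_cart order_trans)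

lemma infnorm_less_iff_cart:
  fixes x :: "real^'n"
  shows "infnorm x < r \<longleftrightarrow> (\<forall>i. \<bar>x$i\<bar> < r)"
  by (metis component_le_infnorm_cart infnorm_attained_cart le_less_trans)

(* For sin \<theta>\<^sub>j = \<omega>\<^sub>j / R with every cos \<theta>\<^sub>j \<ge> 0 this is \<Sum>\<^sub>j (1 + cos \<theta>\<^sub>j). *)

definition cos_sum :: "real^'n \<Rightarrow> real \<Rightarrow> real" where
  "cos_sum \<Omega> R = real CARD('n) + (\<Sum>j\<in>UNIV. sqrt (1 - (\<Omega>$j)^2 / R^2))"

lemma kappa_c_eq_cos_sum:
  fixes \<Omega> :: "real^'n"
  shows "kappa_c \<Omega> R = real CARD('n) * R / cos_sum \<Omega> R"
  unfolding kappa_c_def cos_sum_def ..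

lemma ratio_sq_le_one:
  fixes w R :: real
  assumes "\<bar>w\<bar> \<le> R"
  shows "w^2 / R^2 \<le> 1"
proof (cases "R = 0")
  case False
  with assms have "w^2 \<le> R^2" using abs_le_square_iff[of w R] by simp
  with False show ?thesis by simp
qed simp

lemma cos_sum_ge_card:
  fixes \<Omega> :: "real^'n"
  assumes "\<And>j. \<bar>\<Omega>$j\<bar> \<le> R"
  shows "real CARD('n) \<le> cos_sum \<Omega> R"
proof -
  have "0 \<le> (\<Sum>j\<in>UNIV. sqrt (1 - (\<Omega>$j)^2 / R^2))"
    using ratio_sq_le_one[OF assms] by (intro sum_nonneg) simp
  then show ?thesis unfolding cos_sum_def by simp
qed

lemma cos_sum_pos:
  fixes \<Omega> :: "real^'n"
  assumes "\<And>j. \<bar>\<Omega>$j\<bar> \<le> R"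
  shows "0 < cos_sum \<Omega> R"
proof -
  have "0 < real CARD('n)" by simp
  with cos_sum_ge_card[of \<Omega> R, OF assms] show ?thesis by linarith
qed

lemma cos_sum_le_twice_card:
  fixes \<Omega> :: "real^'n"
  shows "cos_sum \<Omega> R \<le> 2 * real CARD('n)"
proof -
  have "(\<Sum>j\<in>UNIV. sqrt (1 - (\<Omega>$j)^2 / R^2)) \<le> (\<Sum>j\<in>(UNIV::'n set). 1)"
    by (intro sum_mono) simp
  then show ?thesis unfolding cos_sum_def by simp
qed

lemma kappa_c_pos:
  fixes \<Omega> :: "real^'n"
  assumes "infnorm \<Omega> \<le> R" and "0 < R"
  shows "0 < kappa_c \<Omega> R"
  unfolding kappa_c_eq_cos_sum using cos_sum_pos[of \<Omega> R] assms by (simp add: infnorm_le_iff_cart)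

lemma sqrt_le_tangent:
  fixes x y :: real
  assumes "0 \<le> x" and "0 < y"
  shows "sqrt x \<le> sqrt y + (x - y) / (2 * sqrt y)"
proof -
  have "sqrt y + (x - y) / (2 * sqrt y) - sqrt x = (sqrt x - sqrt y)^2 / (2 * sqrt y)"
    using assms by (simp add: field_simps power2_eq_square)
  moreover have "0 \<le> (sqrt x - sqrt y)^2 / (2 * sqrt y)" using assms by simp
  ultimately show ?thesis by linarith
qed

lemma mult_three_minus_sq_le:
  fixes u R :: real
  assumes "0 \<le> u" and "0 < R"
  shows "u * (3 - u^2 / R^2) / 2 \<le> R"
    and "u \<noteq> R \<Longrightarrow> u * (3 - u^2 / R^2) / 2 < R"
proof -
  have eq: "R - u * (3 - u^2 / R^2) / 2 = (R - u)^2 * (2 * R + u) / (2 * R^2)"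
    using assms by (simp add: field_simps power2_eq_square power3_eq_cube)
  have "0 \<le> (R - u)^2 * (2 * R + u) / (2 * R^2)" using assms by simp
  with eq show "u * (3 - u^2 / R^2) / 2 \<le> R" by linarith
  assume "u \<noteq> R"
  with assms have "0 < (R - u)^2 * (2 * R + u) / (2 * R^2)" by simp
  with eq show "u * (3 - u^2 / R^2) / 2 < R" by linarith
qed

lemma sqrt_rescaled_le_tangent:
  fixes w u R :: real
  assumes "\<bar>w\<bar> < u" and "\<bar>w\<bar> \<le> R"
  defines "c \<equiv> sqrt (1 - w^2 / u^2)"
  shows "sqrt (1 - w^2 / R^2) \<le> c + (1 - u^2 / R^2) / 2 * (1 / c - c)"
proof -
  have "w^2 < u^2" using assms(1) abs_le_square_iff[of u w] by auto
  moreover have u_sq_pos: "0 < u^2" using \<open>w^2 < u^2\<close> by (meson le_less_trans zero_le_power2)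
  ultimately have "w^2 / u^2 < 1" by simp
  then have c_pos: "0 < c" and "c^2 = 1 - w^2 / u^2" unfolding c_def by simp_all
  then have w_sq: "w^2 = u^2 * (1 - c^2)" using u_sq_pos by (simp add: field_simps)
  have "sqrt (1 - w^2 / R^2) \<le> c + ((1 - w^2 / R^2) - c^2) / (2 * c)"
    using sqrt_le_tangent[of "1 - w^2 / R^2" "c^2"] ratio_sq_le_one[OF assms(2)] c_pos by simp
  also have "(1 - w^2 / R^2) - c^2 = (1 - u^2 / R^2) * (1 - c^2)"
    unfolding w_sq by (simp add: field_simps)
  also have "(1 - u^2 / R^2) * (1 - c^2) / (2 * c) = (1 - u^2 / R^2) / 2 * (1 / c - c)"
    using c_pos by (simp add: field_simps power2_eq_square)
  finally show ?thesis .
qed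

lemma cos_sum_le_at_ustar:
  fixes \<Omega> :: "real^'n"
  assumes lt_u: "\<And>j. \<bar>\<Omega>$j\<bar> < u" and ustar: "ustar_eq \<Omega> u"
    and le_R: "\<And>j. \<bar>\<Omega>$j\<bar> \<le> R"
  shows "cos_sum \<Omega> R \<le> (3 - u^2 / R^2) / 2 * cos_sum \<Omega> u"
proof -
  define c where "c j = sqrt (1 - (\<Omega>$j)^2 / u^2)" for j
  define k where "k = (1 - u^2 / R^2) / 2"
  have "(\<Sum>j\<in>UNIV. sqrt (1 - (\<Omega>$j)^2 / R^2)) \<le> (\<Sum>j\<in>UNIV. c j + k * (1 / c j - c j))"
    using sqrt_rescaled_le_tangent[OF lt_u le_R] unfolding c_def k_def by (intro sum_mono) simp
  also have "\<dots> = sum c UNIV + k * ((\<Sum>j\<in>UNIV. 1 / c j) - sum c UNIV)"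
    by (simp add: sum.distrib sum_subtractf sum_distrib_left[symmetric])
  also have "(\<Sum>j\<in>UNIV. 1 / c j) - sum c UNIV = cos_sum \<Omega> u"
    using ustar unfolding ustar_eq_def cos_sum_def c_def by simp
  finally have "(\<Sum>j\<in>UNIV. sqrt (1 - (\<Omega>$j)^2 / R^2)) \<le> sum c UNIV + k * cos_sum \<Omega> u" .
  moreover have "cos_sum \<Omega> u = real CARD('n) + sum c UNIV" unfolding cos_sum_def c_def ..
  ultimately have "cos_sum \<Omega> R \<le> (1 + k) * cos_sum \<Omega> u"
    unfolding cos_sum_def[of \<Omega> R] by (simp add: algebra_simps)
  moreover have "1 + k = (3 - u^2 / R^2) / 2" unfolding k_def by simp
  ultimately show ?thesis by simp
qed

lemma kappa_c_le_at_ustar: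
  fixes \<Omega> :: "real^'n"
  assumes lt_u: "infnorm \<Omega> < u" and ustar: "ustar_eq \<Omega> u"
    and le_R: "infnorm \<Omega> \<le> R" and R_pos: "0 < R"
  shows "kappa_c \<Omega> u \<le> kappa_c \<Omega> R"
    and "R \<noteq> u \<Longrightarrow> kappa_c \<Omega> u < kappa_c \<Omega> R"
proof -
  have lt_u': "\<And>j. \<bar>\<Omega>$j\<bar> < u" and le_R': "\<And>j. \<bar>\<Omega>$j\<bar> \<le> R"
    using lt_u le_R by (simp_all add: infnorm_less_iff_cart infnorm_le_iff_cart)
  have u_pos: "0 < u" using lt_u infnorm_pos_le[of \<Omega>] by linarith
  have gu: "0 < cos_sum \<Omega> u" and gR: "0 < cos_sum \<Omega> R"
    using lt_u' le_R' by (simp_all add: cos_sum_pos less_imp_le)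
  have scaled: "u * cos_sum \<Omega> R \<le> u * (3 - u^2 / R^2) / 2 * cos_sum \<Omega> u"
    using cos_sum_le_at_ustar[OF lt_u' ustar le_R'] u_pos by (simp add: mult_left_mono)
  moreover have "u * (3 - u^2 / R^2) / 2 * cos_sum \<Omega> u \<le> R * cos_sum \<Omega> u"
    using mult_three_minus_sq_le(1)[of u R] u_pos R_pos gu by (simp add: mult_right_mono)
  ultimately have "u * cos_sum \<Omega> R \<le> R * cos_sum \<Omega> u" by linarith
  then show "kappa_c \<Omega> u \<le> kappa_c \<Omega> R"
    unfolding kappa_c_eq_cos_sum using gu gR by (simp add: divide_simps mult.commute mult.left_commute)
  assume "R \<noteq> u"
  then have "u * (3 - u^2 / R^2) / 2 * cos_sum \<Omega> u < R * cos_sum \<Omega> u"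
    using mult_three_minus_sq_le(2)[of u R] u_pos R_pos gu by simp
  with scaled have "u * cos_sum \<Omega> R < R * cos_sum \<Omega> u" by linarith
  then show "kappa_c \<Omega> u < kappa_c \<Omega> R"
    unfolding kappa_c_eq_cos_sum using gu gR by (simp add: divide_simps mult.commute mult.left_commute)
qed

lemma ustar_eq_unique:
  fixes \<Omega> :: "real^'n"
  assumes "infnorm \<Omega> < u" "ustar_eq \<Omega> u" "infnorm \<Omega> < v" "ustar_eq \<Omega> v"
  shows "u = v"
proof (rule ccontr)
  have "0 < u" "0 < v" using assms(1,3) infnorm_pos_le[of \<Omega>] by linarith+
  moreover assume "u \<noteq> v"
  ultimately have "kappa_c \<Omega> u < kappa_c \<Omega> v" "kappa_c \<Omega> v < kappa_c \<Omega> u"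
    using kappa_c_le_at_ustar(2) assms by (metis less_imp_le)+
  then show False by simp
qed

lemma has_equilibrium_if_kappa_c_eq:
  fixes \<Omega> :: "real^'n"
  assumes le_R: "\<And>j. \<bar>\<Omega>$j\<bar> \<le> R" and R_pos: "0 < R" and kappa: "kappa_c \<Omega> R = \<kappa>"
  shows "has_equilibrium \<Omega> \<kappa>"
proof -
  define \<Theta> :: "real^'n" where "\<Theta> = (\<chi> j. arcsin (\<Omega>$j / R))"
  have bounded: "-1 \<le> \<Omega>$j / R \<and> \<Omega>$j / R \<le> 1" for j
    using le_R[of j] R_pos by (auto simp: divide_simps abs_le_iff)
  have sin_\<Theta>: "sin (\<Theta>$j) = \<Omega>$j / R" for j
    unfolding \<Theta>_def using bounded[of j] by simp
  have "cos (\<Theta>$j) = sqrt (1 - (\<Omega>$j)^2 / R^2)" for j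
    unfolding \<Theta>_def using bounded[of j] by (simp add: cos_arcsin power_divide)
  then have sum_\<Theta>: "(\<Sum>j\<in>UNIV. 1 + cos (\<Theta>$j)) = cos_sum \<Omega> R"
    unfolding cos_sum_def by (simp add: sum.distrib)
  have "\<kappa> * cos_sum \<Omega> R = real CARD('n) * R"
    using kappa cos_sum_pos[OF le_R] unfolding kappa_c_eq_cos_sum by (auto simp: field_simps)
  then have "is_equilibrium \<Omega> \<kappa> \<Theta>"
    unfolding is_equilibrium_def sum_distrib_right[symmetric] sum_\<Theta> sin_\<Theta>
    using R_pos by (simp add: field_simps)
  then show ?thesis unfolding has_equilibrium_def by blast
qed

lemma has_equilibrium_if_kappa_c_le:
  fixes \<Omega> :: "real^'n"
  assumes le_R: "\<And>j. \<bar>\<Omega>$j\<bar> \<le> R" and R_pos: "0 < R" and "0 < \<kappa>"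
    and kappa: "kappa_c \<Omega> R \<le> \<kappa>"
  shows "has_equilibrium \<Omega> \<kappa>"
proof -
  define h where "h S = \<kappa> * cos_sum \<Omega> S - real CARD('n) * S" for S
  have "continuous_on {R..R + 2 * \<kappa>} h"
    unfolding h_def cos_sum_def using R_pos by (intro continuous_intros) auto
  moreover have "0 \<le> h R"
    using kappa cos_sum_pos[OF le_R] unfolding h_def kappa_c_eq_cos_sum by (simp add: field_simps)
  moreover have "h (R + 2 * \<kappa>) \<le> 0"
  proof -
    have "\<kappa> * cos_sum \<Omega> (R + 2 * \<kappa>) \<le> \<kappa> * (2 * real CARD('n))"
      using cos_sum_le_twice_card \<open>0 < \<kappa>\<close> by (intro mult_left_mono) auto
    moreover have "0 \<le> R * real CARD('n)" using R_pos by simp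
    ultimately show ?thesis unfolding h_def by (simp add: algebra_simps)
  qed
  ultimately obtain S where S: "R \<le> S" "h S = 0"
    using IVT2'[of h "R + 2 * \<kappa>" 0 R] \<open>0 < \<kappa>\<close> by auto
  have le_S: "\<And>j. \<bar>\<Omega>$j\<bar> \<le> S" using le_R S(1) order_trans by blast
  have "kappa_c \<Omega> S = \<kappa>"
    using S(2) cos_sum_pos[OF le_S] unfolding h_def kappa_c_eq_cos_sum by (simp add: field_simps)
  then show ?thesis using has_equilibrium_if_kappa_c_eq[OF le_S] R_pos S(1) by simp
qed

lemma kappa_c_le_if_is_equilibrium:
  fixes \<Omega> :: "real^'n"
  assumes "0 < \<kappa>" and "\<Omega> \<noteq> 0" and eq: "is_equilibrium \<Omega> \<kappa> \<Theta>"
  shows "\<exists>R>0. (\<forall>j. \<bar>\<Omega>$j\<bar> \<le> R) \<and> kappa_c \<Omega> R \<le> \<kappa>"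
proof -
  define S where "S = (\<Sum>j\<in>UNIV. 1 + cos (\<Theta>$j))"
  define R where "R = \<kappa> * S / real CARD('n)"
  have \<Omega>_eq: "\<Omega>$i = R * sin (\<Theta>$i)" for i
  proof -
    have "\<Omega>$i = \<kappa> / real CARD('n) * (\<Sum>j\<in>UNIV. (1 + cos (\<Theta>$j)) * sin (\<Theta>$i))"
      using eq unfolding is_equilibrium_def by (metis eq_iff_diff_eq_0)
    then show ?thesis unfolding R_def S_def by (simp add: sum_distrib_right[symmetric])
  qed
  have "0 \<le> S" unfolding S_def by (intro sum_nonneg) (smt (verit) cos_ge_minus_one)
  obtain i where "\<Omega>$i \<noteq> 0" using \<open>\<Omega> \<noteq> 0\<close> by (metis vec_eq_iff zero_index)
  then have "R \<noteq> 0" using \<Omega>_eq[of i] by auto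
  moreover have "0 \<le> R" unfolding R_def using \<open>0 \<le> S\<close> \<open>0 < \<kappa>\<close> by simp
  ultimately have R_pos: "0 < R" by simp
  have le_R: "\<bar>\<Omega>$j\<bar> \<le> R" for j
    using \<Omega>_eq[of j] R_pos abs_sin_le_one[of "\<Theta>$j"] by (simp add: abs_mult mult_left_le)
  have "cos (\<Theta>$j) \<le> sqrt (1 - (\<Omega>$j)^2 / R^2)" for j
  proof -
    have "(cos (\<Theta>$j))^2 = 1 - (\<Omega>$j)^2 / R^2"
      using \<Omega>_eq[of j] R_pos by (simp add: cos_squared_eq power_mult_distrib)
    then show ?thesis by (metis real_sqrt_abs abs_ge_self)
  qed
  then have "S \<le> cos_sum \<Omega> R"
    unfolding S_def cos_sum_def by (simp add: sum.distrib sum_mono)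
  moreover have "0 < S" using R_pos \<open>0 < \<kappa>\<close> unfolding R_def by (simp add: zero_less_divide_iff zero_less_mult_iff)
  ultimately have "\<kappa> * S / cos_sum \<Omega> R \<le> \<kappa> * S / S"
    using \<open>0 < \<kappa>\<close> by (intro divide_left_mono) auto
  moreover have "kappa_c \<Omega> R = \<kappa> * S / cos_sum \<Omega> R"
    unfolding kappa_c_eq_cos_sum R_def by simp
  ultimately show ?thesis using R_pos le_R \<open>0 < S\<close> by auto
qed

lemma has_equilibrium_iff_ex_kappa_c_le:
  fixes \<Omega> :: "real^'n"
  assumes "\<Omega> \<noteq> 0" and "0 < \<kappa>"
  shows "has_equilibrium \<Omega> \<kappa> \<longleftrightarrow> (\<exists>R>0. infnorm \<Omega> \<le> R \<and> kappa_c \<Omega> R \<le> \<kappa>)"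
  using assms kappa_c_le_if_is_equilibrium has_equilibrium_if_kappa_c_le
  unfolding has_equilibrium_def infnorm_le_iff_cart by meson

lemma has_equilibrium_iff_kappa_c_ustar_le:
  fixes \<Omega> :: "real^'n"
  assumes "\<Omega> \<noteq> 0" and "infnorm \<Omega> < u" and "ustar_eq \<Omega> u" and "0 < \<kappa>"
  shows "has_equilibrium \<Omega> \<kappa> \<longleftrightarrow> kappa_c \<Omega> u \<le> \<kappa>"
proof -
  have "0 < u" using assms(2) infnorm_pos_le[of \<Omega>] by linarith
  then show ?thesis
    using has_equilibrium_iff_ex_kappa_c_le[OF assms(1,4)] kappa_c_le_at_ustar(1)[OF assms(2,3)] assms(2)
    by (meson less_imp_le order_trans)
qed

lemma Inf_threshold_eq:
  fixes K :: real
  assumes "\<forall>\<kappa>>0. P \<kappa> \<longleftrightarrow> K \<le> \<kappa>" and "0 < K"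
  shows "Inf {s. 0 < s \<and> (\<forall>\<kappa>>s. P \<kappa>)} = K"
proof -
  have "{s. 0 < s \<and> (\<forall>\<kappa>>s. P \<kappa>)} = {K..}"
  proof (intro set_eqI iffI)
    fix s assume "s \<in> {s. 0 < s \<and> (\<forall>\<kappa>>s. P \<kappa>)}"
    then have "0 < s" "\<forall>\<kappa>>s. K \<le> \<kappa>" using assms(1) by auto
    then show "s \<in> {K..}" by (metis atLeast_iff dense not_le)
  qed (use assms in auto)
  then show ?thesis by simp
qed

definition opt_cos :: "real \<Rightarrow> real" where
  "opt_cos a = (sqrt (a^2 + 8) - a) / 4"

lemma opt_cos_root: "2 * (opt_cos a)^2 + a * opt_cos a - 1 = 0"
proof -
  have "(sqrt (a^2 + 8))^2 = a^2 + 8" by (simp add: add_nonneg_pos)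
  then show ?thesis unfolding opt_cos_def by (simp add: field_simps power2_eq_square)
qed

lemma opt_cos_pos: "0 < opt_cos a"
proof -
  have "a \<le> sqrt (a^2)" by simp
  also have "sqrt (a^2) < sqrt (a^2 + 8)" by (rule real_sqrt_less_mono) simp
  finally show ?thesis unfolding opt_cos_def by simp
qed

lemma opt_cos_le_half:
  assumes "1 \<le> a"
  shows "opt_cos a \<le> 1 / 2"
proof -
  have "sqrt (a^2 + 8) \<le> a + 2"
    using assms by (intro real_le_lsqrt) (simp_all add: power2_eq_square algebra_simps)
  then show ?thesis unfolding opt_cos_def by simp
qed

lemma mult_sqrt_le_at_opt_cos:
  fixes a s :: real
  assumes "0 \<le> a" and "0 \<le> s"
  shows "(a + s) * sqrt (1 - s^2) \<le> (a + opt_cos a) * sqrt (1 - (opt_cos a)^2)"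
proof -
  define z where "z = opt_cos a"
  have "0 < z" unfolding z_def by (rule opt_cos_pos)
  have "(1 - z^2) * (a + z)^2 - (1 - s^2) * (a + s)^2
      = (s - z)^2 * (s^2 + (2 * a + 2 * z) * s + a^2 + 3 * a * z + z^2)
        + (2 * z^2 + a * z - 1) * ((s - z)^2 + 2 * (z + a) * (s - z))"
    by (simp add: algebra_simps power2_eq_square)
  moreover have "2 * z^2 + a * z - 1 = 0" unfolding z_def by (rule opt_cos_root)
  moreover have "0 \<le> (s - z)^2 * (s^2 + (2 * a + 2 * z) * s + a^2 + 3 * a * z + z^2)"
    using assms \<open>0 < z\<close> by simp
  ultimately have "(1 - s^2) * (a + s)^2 \<le> (1 - z^2) * (a + z)^2" by simp
  then have "sqrt (1 - s^2) * \<bar>a + s\<bar> \<le> sqrt (1 - z^2) * \<bar>a + z\<bar>"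
    by (metis real_sqrt_abs real_sqrt_le_mono real_sqrt_mult)
  then show ?thesis using assms \<open>0 < z\<close> by (simp add: z_def mult.commute)
qed

(* The minimum over R \<ge> m of kappa_c for a frequency vector whose only nonzero entry is \<plusminus>m. *)

definition kappa_lower_bound :: "real \<Rightarrow> real \<Rightarrow> real" where
  "kappa_lower_bound N m =
     N * m / ((2 * N - 1 + opt_cos (2 * N - 1)) * sqrt (1 - (opt_cos (2 * N - 1))^2))"

lemma cos_sum_le_single_term:
  fixes \<Omega> :: "real^'n"
  shows "cos_sum \<Omega> R \<le> 2 * real CARD('n) - 1 + sqrt (1 - (\<Omega>$i)^2 / R^2)"
    and "(\<And>j. j \<noteq> i \<Longrightarrow> \<Omega>$j = 0)
      \<Longrightarrow> cos_sum \<Omega> R = 2 * real CARD('n) - 1 + sqrt (1 - (\<Omega>$i)^2 / R^2)"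
proof -
  have split: "cos_sum \<Omega> R = real CARD('n) + sqrt (1 - (\<Omega>$i)^2 / R^2)
      + (\<Sum>j\<in>UNIV - {i}. sqrt (1 - (\<Omega>$j)^2 / R^2))"
    unfolding cos_sum_def by (simp add: sum.remove[of UNIV i])
  have card: "(\<Sum>j\<in>UNIV - {i}. (1::real)) = real CARD('n) - 1"
    by (simp add: card_Diff_singleton of_nat_diff Suc_le_eq)
  have "(\<Sum>j\<in>UNIV - {i}. sqrt (1 - (\<Omega>$j)^2 / R^2)) \<le> (\<Sum>j\<in>UNIV - {i}. 1)"
    by (intro sum_mono) simp
  with split card show "cos_sum \<Omega> R \<le> 2 * real CARD('n) - 1 + sqrt (1 - (\<Omega>$i)^2 / R^2)"
    by simp
  assume "\<And>j. j \<noteq> i \<Longrightarrow> \<Omega>$j = 0"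
  then have "(\<Sum>j\<in>UNIV - {i}. sqrt (1 - (\<Omega>$j)^2 / R^2)) = (\<Sum>j\<in>UNIV - {i}. 1)"
    by (intro sum.cong) auto
  with split card show "cos_sum \<Omega> R = 2 * real CARD('n) - 1 + sqrt (1 - (\<Omega>$i)^2 / R^2)"
    by simp
qed

lemma kappa_c_ge_lower_bound:
  fixes \<Omega> :: "real^'n"
  assumes le_R: "infnorm \<Omega> \<le> R" and R_pos: "0 < R"
  shows "kappa_lower_bound (real CARD('n)) (infnorm \<Omega>) \<le> kappa_c \<Omega> R"
proof -
  define a where "a = 2 * real CARD('n) - 1"
  define z where "z = opt_cos a"
  define m where "m = infnorm \<Omega>"
  define s where "s = sqrt (1 - m^2 / R^2)"
  obtain i where "\<bar>\<Omega>$i\<bar> = m" using infnorm_attained_cart unfolding m_def by blast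
  then have i: "(\<Omega>$i)^2 = m^2" by (metis power2_abs)
  have "1 \<le> a" unfolding a_def by simp
  then have "0 < z" "z \<le> 1 / 2" unfolding z_def using opt_cos_pos opt_cos_le_half by auto
  then have "0 < sqrt (1 - z^2)" by (simp add: power_le_one abs_square_less_1)
  have "0 \<le> m" "m \<le> R" using le_R infnorm_pos_le unfolding m_def by auto
  have "m^2 / R^2 \<le> 1" using ratio_sq_le_one[of m R] \<open>0 \<le> m\<close> \<open>m \<le> R\<close> by simp
  then have "0 \<le> s" "1 - s^2 = (m / R)^2" unfolding s_def by (simp_all add: power_divide)
  then have "sqrt (1 - s^2) = m / R" using \<open>0 \<le> m\<close> R_pos by simp
  then have "(a + s) * (m / R) \<le> (a + z) * sqrt (1 - z^2)"
    using mult_sqrt_le_at_opt_cos[of a s] \<open>1 \<le> a\<close> \<open>0 \<le> s\<close> unfolding z_def by simp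
  moreover have "cos_sum \<Omega> R \<le> a + s"
    using cos_sum_le_single_term(1)[of \<Omega> R i] i unfolding a_def s_def by simp
  then have "m * cos_sum \<Omega> R \<le> m * (a + s)" using \<open>0 \<le> m\<close> by (rule mult_left_mono)
  ultimately have "m * cos_sum \<Omega> R \<le> R * ((a + z) * sqrt (1 - z^2))"
    using R_pos by (simp add: field_simps)
  moreover have "0 < (a + z) * sqrt (1 - z^2)" "0 < cos_sum \<Omega> R"
    using \<open>0 < z\<close> \<open>1 \<le> a\<close> \<open>0 < sqrt (1 - z^2)\<close> cos_sum_pos[of \<Omega> R] le_R
    by (simp_all add: infnorm_le_iff_cart)
  ultimately have "m / ((a + z) * sqrt (1 - z^2)) \<le> R / cos_sum \<Omega> R"
    by (simp add: field_simps)
  then have "real CARD('n) * (m / ((a + z) * sqrt (1 - z^2))) \<le> real CARD('n) * (R / cos_sum \<Omega> R)"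
    by (rule mult_left_mono) simp
  then show ?thesis unfolding kappa_c_eq_cos_sum kappa_lower_bound_def m_def a_def z_def by simp
qed

lemma kappa_c_eq_lower_bound_if_single:
  fixes \<Omega> :: "real^'n"
  assumes "\<Omega> \<noteq> 0" and single: "card {i. \<Omega>$i \<noteq> 0} \<le> 1"
  shows "\<exists>R\<ge>infnorm \<Omega>. kappa_c \<Omega> R = kappa_lower_bound (real CARD('n)) (infnorm \<Omega>)"
proof -
  define a where "a = 2 * real CARD('n) - 1"
  define z where "z = opt_cos a"
  define m where "m = infnorm \<Omega>"
  define w where "w = sqrt (1 - z^2)"
  obtain i where "\<bar>\<Omega>$i\<bar> = m" using infnorm_attained_cart unfolding m_def by blast
  then have i: "(\<Omega>$i)^2 = m^2" by (metis power2_abs)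
  have "0 < m" using \<open>\<Omega> \<noteq> 0\<close> infnorm_pos_lt unfolding m_def by blast
  have others: "\<Omega>$j = 0" if "j \<noteq> i" for j
  proof (rule ccontr)
    assume "\<Omega>$j \<noteq> 0"
    moreover have "\<Omega>$i \<noteq> 0" using i \<open>0 < m\<close> by auto
    ultimately have "card {i, j} \<le> card {i. \<Omega>$i \<noteq> 0}" by (intro card_mono) auto
    with single \<open>j \<noteq> i\<close> show False by simp
  qed
  have "1 \<le> a" unfolding a_def by simp
  then have "0 < z" "z \<le> 1 / 2" unfolding z_def using opt_cos_pos opt_cos_le_half by auto
  then have "0 < w" "w \<le> 1" unfolding w_def by (simp_all add: power_le_one abs_square_less_1)
  have "m^2 / (m / w)^2 = 1 - z^2"
    using \<open>0 < m\<close> \<open>0 < w\<close> \<open>z \<le> 1 / 2\<close> unfolding w_def by (simp add: power_divide power_le_one)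
  then have "cos_sum \<Omega> (m / w) = a + z"
    using cos_sum_le_single_term(2)[of i \<Omega> "m / w", OF others] i \<open>0 < z\<close> unfolding a_def by simp
  then have "kappa_c \<Omega> (m / w) = real CARD('n) * m / ((a + z) * w)"
    unfolding kappa_c_eq_cos_sum by simp
  moreover have "m \<le> m / w" using \<open>0 < m\<close> \<open>0 < w\<close> \<open>w \<le> 1\<close> by (simp add: le_divide_eq)
  ultimately show ?thesis unfolding kappa_lower_bound_def m_def w_def a_def z_def by blast
qed

lemma kappa_lower_bound_closed_form:
  "16 * N * m /
      ((6 * N - 3 + sqrt (4 * N^2 - 4 * N + 9))
       * sqrt (5 - 2 * N + sqrt (4 * N^2 - 4 * N + 9))
       * sqrt (3 + 2 * N - sqrt (4 * N^2 - 4 * N + 9)))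
    = kappa_lower_bound N m"
proof -
  define a where "a = 2 * N - 1"
  define z where "z = opt_cos a"
  have "4 * z + a = sqrt (a^2 + 8)" unfolding z_def opt_cos_def by (simp add: field_simps)
  also have "a^2 + 8 = 4 * N^2 - 4 * N + 9" unfolding a_def by (simp add: power2_eq_square algebra_simps)
  finally have root: "sqrt (4 * N^2 - 4 * N + 9) = 4 * z + a" ..
  have "sqrt (4 * (1 + z)) * sqrt (4 * (1 - z)) = 4 * sqrt ((1 + z) * (1 - z))"
    unfolding real_sqrt_mult by simp
  also have "(1 + z) * (1 - z) = 1 - z^2" by (simp add: algebra_simps power2_eq_square)
  finally have "sqrt (4 * (1 + z)) * sqrt (4 * (1 - z)) = 4 * sqrt (1 - z^2)" .
  then have "(6 * N - 3 + sqrt (4 * N^2 - 4 * N + 9))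
             * sqrt (5 - 2 * N + sqrt (4 * N^2 - 4 * N + 9))
             * sqrt (3 + 2 * N - sqrt (4 * N^2 - 4 * N + 9))
      = 16 * ((a + z) * sqrt (1 - z^2))"
    unfolding root a_def by (simp add: algebra_simps)
  then show ?thesis unfolding kappa_lower_bound_def a_def z_def by simp
qed

lemma kappa_lower_bound_ge:
  fixes N m :: real
  assumes "1 \<le> N" and "0 \<le> m"
  shows "2 * N * m / (4 * N - 1) \<le> kappa_lower_bound N m"
proof -
  define a where "a = 2 * N - 1"
  define z where "z = opt_cos a"
  have "1 \<le> a" unfolding a_def using assms by simp
  then have "0 < z" "z \<le> 1 / 2" unfolding z_def using opt_cos_pos opt_cos_le_half by auto
  then have "0 < sqrt (1 - z^2)" "sqrt (1 - z^2) \<le> 1" by (simp_all add: power_le_one abs_square_less_1)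
  then have "(a + z) * sqrt (1 - z^2) \<le> (a + z) * 1"
    using \<open>1 \<le> a\<close> \<open>0 < z\<close> by (intro mult_left_mono) auto
  also have "\<dots> \<le> (4 * N - 1) / 2" using \<open>z \<le> 1 / 2\<close> unfolding a_def by simp
  finally have "N * m / ((4 * N - 1) / 2) \<le> N * m / ((a + z) * sqrt (1 - z^2))"
    using assms \<open>1 \<le> a\<close> \<open>0 < z\<close> \<open>0 < sqrt (1 - z^2)\<close> by (intro divide_left_mono) auto
  then show ?thesis unfolding kappa_lower_bound_def a_def z_def by (simp add: mult.commute mult.left_commute)
qed

lemma sqrt_3_lt_2: "sqrt 3 < (2::real)"
  by (rule real_less_lsqrt) auto

lemma infnorm_less_two_div_sqrt_3:
  fixes \<Omega> :: "real^'n"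
  assumes "\<Omega> \<noteq> 0"
  shows "infnorm \<Omega> < 2 / sqrt 3 * infnorm \<Omega>"
  using assms infnorm_pos_lt[of \<Omega>] sqrt_3_lt_2 by (simp add: field_simps)

lemma cos_at_two_div_sqrt_3:
  fixes w m :: real
  assumes "\<bar>w\<bar> \<le> m"
  shows "1 / 2 \<le> sqrt (1 - w^2 / (2 / sqrt 3 * m)^2)"
    and "\<bar>w\<bar> = m \<Longrightarrow> 0 < m \<Longrightarrow> sqrt (1 - w^2 / (2 / sqrt 3 * m)^2) = 1 / 2"
proof -
  have half: "sqrt (1 / 4) = (1 / 2 :: real)" by (rule real_sqrt_unique) (auto simp: power2_eq_square)
  have sq: "(2 / sqrt 3 * m)^2 = 4 / 3 * m^2" by (simp add: power_mult_distrib power_divide)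
  have "w^2 \<le> m^2" using assms abs_le_square_iff[of w m] by simp
  then have "w^2 / (4 / 3 * m^2) \<le> 3 / 4" by (cases "m = 0") (simp_all add: field_simps)
  then have "sqrt (1 / 4) \<le> sqrt (1 - w^2 / (2 / sqrt 3 * m)^2)"
    unfolding sq by (intro real_sqrt_le_mono) simp
  then show "1 / 2 \<le> sqrt (1 - w^2 / (2 / sqrt 3 * m)^2)" unfolding half .
  assume "\<bar>w\<bar> = m" and "0 < m"
  then have "w^2 = m^2" by (metis power2_abs)
  with \<open>0 < m\<close> have quarter: "1 - w^2 / (2 / sqrt 3 * m)^2 = 1 / 4" unfolding sq by simp
  show "sqrt (1 - w^2 / (2 / sqrt 3 * m)^2) = 1 / 2" unfolding quarter by (rule half)
qed

lemma cos_sum_at_two_div_sqrt_3: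
  fixes \<Omega> :: "real^'n"
  shows "3 / 2 * real CARD('n) \<le> cos_sum \<Omega> (2 / sqrt 3 * infnorm \<Omega>)"
    and "\<Omega> \<noteq> 0 \<Longrightarrow> (\<forall>i. \<bar>\<Omega>$i\<bar> = infnorm \<Omega>)
      \<Longrightarrow> cos_sum \<Omega> (2 / sqrt 3 * infnorm \<Omega>) = 3 / 2 * real CARD('n)"
proof -
  have "(\<Sum>j\<in>(UNIV::'n set). 1 / 2) \<le> (\<Sum>j\<in>UNIV. sqrt (1 - (\<Omega>$j)^2 / (2 / sqrt 3 * infnorm \<Omega>)^2))"
    by (intro sum_mono cos_at_two_div_sqrt_3(1) component_le_infnorm_cart)
  then show "3 / 2 * real CARD('n) \<le> cos_sum \<Omega> (2 / sqrt 3 * infnorm \<Omega>)"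
    unfolding cos_sum_def by simp
  assume "\<Omega> \<noteq> 0" and "\<forall>i. \<bar>\<Omega>$i\<bar> = infnorm \<Omega>"
  then have half: "sqrt (1 - (\<Omega>$j)^2 / (2 / sqrt 3 * infnorm \<Omega>)^2) = 1 / 2" for j
    using cos_at_two_div_sqrt_3(2)[of "\<Omega>$j" "infnorm \<Omega>"] infnorm_pos_lt[of \<Omega>] by simp
  show "cos_sum \<Omega> (2 / sqrt 3 * infnorm \<Omega>) = 3 / 2 * real CARD('n)"
    unfolding cos_sum_def half by simp
qed

lemma kappa_c_at_two_div_sqrt_3:
  fixes \<Omega> :: "real^'n"
  shows "kappa_c \<Omega> (2 / sqrt 3 * infnorm \<Omega>) \<le> 4 / (3 * sqrt 3) * infnorm \<Omega>"
    and "\<Omega> \<noteq> 0 \<Longrightarrow> (\<forall>i. \<bar>\<Omega>$i\<bar> = infnorm \<Omega>)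
      \<Longrightarrow> kappa_c \<Omega> (2 / sqrt 3 * infnorm \<Omega>) = 4 / (3 * sqrt 3) * infnorm \<Omega>"
proof -
  define R where "R = 2 / sqrt 3 * infnorm \<Omega>"
  have "0 \<le> R" unfolding R_def using infnorm_pos_le[of \<Omega>] by simp
  have g: "3 / 2 * real CARD('n) \<le> cos_sum \<Omega> R" unfolding R_def by (rule cos_sum_at_two_div_sqrt_3(1))
  moreover have "0 < 3 / 2 * real CARD('n)" by simp
  ultimately have "0 < cos_sum \<Omega> R" by linarith
  with g \<open>0 \<le> R\<close> have "kappa_c \<Omega> R \<le> real CARD('n) * R / (3 / 2 * real CARD('n))"
    unfolding kappa_c_eq_cos_sum by (intro divide_left_mono mult_pos_pos) simp_all
  then show "kappa_c \<Omega> (2 / sqrt 3 * infnorm \<Omega>) \<le> 4 / (3 * sqrt 3) * infnorm \<Omega>"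
    unfolding R_def by simp
  assume "\<Omega> \<noteq> 0" and "\<forall>i. \<bar>\<Omega>$i\<bar> = infnorm \<Omega>"
  then have g_eq: "cos_sum \<Omega> R = 3 / 2 * real CARD('n)"
    unfolding R_def by (rule cos_sum_at_two_div_sqrt_3(2))
  have "kappa_c \<Omega> R = real CARD('n) * R / (3 / 2 * real CARD('n))"
    unfolding kappa_c_eq_cos_sum g_eq ..
  then show "kappa_c \<Omega> (2 / sqrt 3 * infnorm \<Omega>) = 4 / (3 * sqrt 3) * infnorm \<Omega>"
    unfolding R_def by simp
qed

lemma ustar_eq_at_two_div_sqrt_3:
  fixes \<Omega> :: "real^'n"
  assumes "\<Omega> \<noteq> 0" and "\<forall>i. \<bar>\<Omega>$i\<bar> = infnorm \<Omega>"
  shows "ustar_eq \<Omega> (2 / sqrt 3 * infnorm \<Omega>)"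
proof -
  have half: "sqrt (1 - (\<Omega>$j)^2 / (2 / sqrt 3 * infnorm \<Omega>)^2) = 1 / 2" for j
    using cos_at_two_div_sqrt_3(2)[of "\<Omega>$j" "infnorm \<Omega>"] assms infnorm_pos_lt[of \<Omega>] by simp
  show ?thesis unfolding ustar_eq_def half by simp
qed

theorem proposition6p3:
  fixes \<Omega> :: "real^'n" and u :: real
  defines "N \<equiv> real CARD('n)"
  assumes nz: "\<Omega> \<noteq> 0"
    and u_lo: "infnorm \<Omega> < u"
    and u_hi: "u \<le> 2 / sqrt 3 * infnorm \<Omega>"
    and u_eq: "ustar_eq \<Omega> u"
  shows "(\<exists>!v. infnorm \<Omega> < v \<and> v \<le> 2 / sqrt 3 * infnorm \<Omega> \<and> ustar_eq \<Omega> v)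
    \<and> (\<forall>\<kappa>>0. has_equilibrium \<Omega> \<kappa> \<longleftrightarrow> \<kappa> \<ge> kappa_c \<Omega> u)
    \<and> kappa_c \<Omega> u = Inf {\<kappa>s. \<kappa>s > 0 \<and> (\<forall>\<kappa>>\<kappa>s. has_equilibrium \<Omega> \<kappa>)}
    \<and> 2 * N * infnorm \<Omega> / (4 * N - 1)
        \<le> 16 * N * infnorm \<Omega> /
            ((6 * N - 3 + sqrt (4 * N^2 - 4 * N + 9))
             * sqrt (5 - 2 * N + sqrt (4 * N^2 - 4 * N + 9))
             * sqrt (3 + 2 * N - sqrt (4 * N^2 - 4 * N + 9)))
    \<and> 16 * N * infnorm \<Omega> /
            ((6 * N - 3 + sqrt (4 * N^2 - 4 * N + 9))
             * sqrt (5 - 2 * N + sqrt (4 * N^2 - 4 * N + 9))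
             * sqrt (3 + 2 * N - sqrt (4 * N^2 - 4 * N + 9)))
        \<le> kappa_c \<Omega> u
    \<and> kappa_c \<Omega> u \<le> 4 / (3 * sqrt 3) * infnorm \<Omega>
    \<and> (card {i. \<Omega>$i \<noteq> 0} \<le> 1 \<longrightarrow>
         16 * N * infnorm \<Omega> /
            ((6 * N - 3 + sqrt (4 * N^2 - 4 * N + 9))
             * sqrt (5 - 2 * N + sqrt (4 * N^2 - 4 * N + 9))
             * sqrt (3 + 2 * N - sqrt (4 * N^2 - 4 * N + 9)))
         = kappa_c \<Omega> u)
    \<and> ((\<forall>i. \<bar>\<Omega>$i\<bar> = infnorm \<Omega>) \<longrightarrow> kappa_c \<Omega> u = 4 / (3 * sqrt 3) * infnorm \<Omega>)"
proof -
  have m_pos: "0 < infnorm \<Omega>" using nz infnorm_pos_lt by blast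
  have minimal: "kappa_c \<Omega> u \<le> kappa_c \<Omega> R" if "infnorm \<Omega> \<le> R" for R
    using kappa_c_le_at_ustar(1)[OF u_lo u_eq that] m_pos that by simp
  have lower: "kappa_lower_bound (real CARD('n)) (infnorm \<Omega>) \<le> kappa_c \<Omega> u"
    using kappa_c_ge_lower_bound[of \<Omega> u] u_lo m_pos by simp
  have equilibria: "\<forall>\<kappa>>0. has_equilibrium \<Omega> \<kappa> \<longleftrightarrow> kappa_c \<Omega> u \<le> \<kappa>"
    using has_equilibrium_iff_kappa_c_ustar_le[OF nz u_lo u_eq] by blast
  show ?thesis
    unfolding N_def kappa_lower_bound_closed_form
  proof (intro conjI impI)
    show "\<exists>!v. infnorm \<Omega> < v \<and> v \<le> 2 / sqrt 3 * infnorm \<Omega> \<and> ustar_eq \<Omega> v"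
      using u_lo u_hi u_eq ustar_eq_unique by blast
    show "\<forall>\<kappa>>0. has_equilibrium \<Omega> \<kappa> \<longleftrightarrow> kappa_c \<Omega> u \<le> \<kappa>" by (fact equilibria)
    show "kappa_c \<Omega> u = Inf {\<kappa>s. \<kappa>s > 0 \<and> (\<forall>\<kappa>>\<kappa>s. has_equilibrium \<Omega> \<kappa>)}"
      using Inf_threshold_eq[OF equilibria kappa_c_pos] u_lo m_pos by simp
    show "2 * real CARD('n) * infnorm \<Omega> / (4 * real CARD('n) - 1)
        \<le> kappa_lower_bound (real CARD('n)) (infnorm \<Omega>)"
      using kappa_lower_bound_ge m_pos by simp
    show "kappa_lower_bound (real CARD('n)) (infnorm \<Omega>) \<le> kappa_c \<Omega> u" by (fact lower)
    show "kappa_c \<Omega> u \<le> 4 / (3 * sqrt 3) * infnorm \<Omega>"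
      using order_trans[OF minimal kappa_c_at_two_div_sqrt_3(1)] infnorm_less_two_div_sqrt_3[OF nz]
      by simp
    show "kappa_c \<Omega> u = 4 / (3 * sqrt 3) * infnorm \<Omega>" if "\<forall>i. \<bar>\<Omega>$i\<bar> = infnorm \<Omega>"
      using ustar_eq_unique[OF u_lo u_eq infnorm_less_two_div_sqrt_3[OF nz] ustar_eq_at_two_div_sqrt_3]
        kappa_c_at_two_div_sqrt_3(2) nz that by simp
    assume "card {i. \<Omega>$i \<noteq> 0} \<le> 1"
    then obtain R where "infnorm \<Omega> \<le> R" "kappa_c \<Omega> R = kappa_lower_bound (real CARD('n)) (infnorm \<Omega>)"
      using kappa_c_eq_lower_bound_if_single[OF nz] by blast
    then show "kappa_lower_bound (real CARD('n)) (infnorm \<Omega>) = kappa_c \<Omega> u"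
      using minimal lower by (metis order_antisym)
  qed
qed

end
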